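(* Suppose $\Xi\in\mathcal{M}_p^{C,\kappa}(\underline{\mathcal{U}})$ for some $C\in(0,\infty)$ and $\kappa\in(0,1)$. Then for every $x\in\mathcal{X}$, $\sum_{t\le-1}w_t\,\mathbb{E}_{\mathbf{U}\sim\Xi}[d_{\mathcal{X}}(f(x,U_t),x)^p]<\infty$.
   Context: $p\in[1,\infty)$ fixed; $\mathbb{Z}_-=\{\dots,-2,-1\}$. Spaces carry Borel $\sigma$-algebras and products carry product topologies; $P(\mathcal{Y})$ denotes Borel probability measures, $P_p(\mathcal{Y})$ those with finite $p$-th moment for a metric space. $\mathcal{Z},\mathcal{U}$ Polish; $(\mathcal{X},d_{\mathcal{X}})$ Polish with complete metric; $f:\mathcal{X}\times\mathcal{U}\to\mathcal{X}$ continuous. $\underline{\mathcal{Z}}=\mathcal{Z}^{\mathbb{Z}_-}$ (product topology); $V:\underline{\mathcal{Z}}\to\mathcal{U}^{\mathbb{Z}_-}$ continuous and causal (if $z_s=z'_s$ for all $s\le t$ then $V(\mathbf{z})_t=V(\mathbf{z}')_t$); $\underline{\mathcal{U}}=V(\underline{\mathcal{Z}})$ Polish with a metric $d_{\underline{\mathcal{U}}}$ inducing its topology. $\mathbf{w}=(w_t)_{t\le-1}\subseteq(0,1)$ monotone, $\sum_tw_t=1$, $\sup_{n\ge1}(\sup_tw_t/w_{t-n})^{1/n}<\infty$. Fix $x_*\in\mathcal{X}$. $\Theta\in P(\underline{\mathcal{Z}})$ has $\kappa$-contractive marginals if for $\mathbf{Z}\sim\Theta$, a.s. for all $x_1,x_2\in\mathcal{X}$,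 $t\le-1$: $\mathbb{E}[d_{\mathcal{X}}(f(x_1,V(\mathbf{Z})_t),f(x_2,V(\mathbf{Z})_t))^p\mid(Z_s)_{s\le t-1}]\le\kappa d_{\mathcal{X}}(x_1,x_2)^p$. $\Xi\in P(\underline{\mathcal{U}})$ is $C$-bounded if $\sum_tw_t\mathbb{E}_{\mathbf{U}\sim\Xi}[d_{\mathcal{X}}(f(x_*,U_t),x_* )^p]\le C$. $\mathcal{M}_p^{C,\kappa}(\underline{\mathcal{U}})$: the $C$-bounded $\Xi\in P_p(\underline{\mathcal{U}})$ with $\Xi=V_*\Theta$ for some $\Theta\in P(\underline{\mathcal{Z}})$ with independent coordinates and $\kappa$-contractive marginals. *)

theory Defs
  imports "HOL-Analysis.Analysis" "HOL-Probability.Probability"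
begin

text \<open>Time convention: the index set Z_- = {..., -2, -1} is encoded by nat,
  with n :: nat standing for the time t = -1 - n.  So sequences indexed by
  Z_- are functions nat => _, "s <= t" corresponds to "m >= n", and
  w_{t-k} corresponds to w (n + k).\<close>

definition causal :: "((nat \<Rightarrow> 'z) \<Rightarrow> (nat \<Rightarrow> 'u)) \<Rightarrow> bool" where
  "causal V \<longleftrightarrow> (\<forall>z z' n. (\<forall>m\<ge>n. z m = z' m) \<longrightarrow> V z n = V z' n)"

definition admissible_weights :: "(nat \<Rightarrow> real) \<Rightarrow> bool" where
  "admissible_weights w \<longleftrightarrow>
     (\<forall>n. 0 < w n \<and> w n < 1) \<and> (mono w \<or> antimono w) \<and> w sums 1 \<and>
     (\<exists>B. \<forall>k\<ge>1. bdd_above (range (\<lambda>n. w n / w (n + k))) \<and>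
                 (SUP n. w n / w (n + k)) powr (1 / real k) \<le> B)"

text \<open>The sigma-algebra generated by the past (Z_s)_{s <= t-1}, where t = -1-n;
  i.e. generated by the coordinates m with m > n.\<close>
definition past_algebra :: "(nat \<Rightarrow> 'z::topological_space) measure \<Rightarrow> nat \<Rightarrow> (nat \<Rightarrow> 'z) measure" where
  "past_algebra \<Theta> n =
     sigma (space \<Theta>) {{z \<in> space \<Theta>. z m \<in> A} | m A. n < m \<and> A \<in> sets borel}"

definition kappa_contractive_marginals ::
  "real \<Rightarrow> real \<Rightarrow> ('x::metric_space \<times> 'u \<Rightarrow> 'x) \<Rightarrow> ((nat \<Rightarrow> 'z::topological_space) \<Rightarrow> (nat \<Rightarrow> 'u))
    \<Rightarrow> (nat \<Rightarrow> 'z) measure \<Rightarrow> bool" where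
  "kappa_contractive_marginals p \<kappa> f V \<Theta> \<longleftrightarrow>
     (\<forall>x1 x2 n. AE z in \<Theta>.
        nn_cond_exp \<Theta> (past_algebra \<Theta> n)
          (\<lambda>z. ennreal (dist (f (x1, V z n)) (f (x2, V z n)) powr p)) z
        \<le> ennreal (\<kappa> * dist x1 x2 powr p))"

definition C_bounded ::
  "real \<Rightarrow> (nat \<Rightarrow> real) \<Rightarrow> ('x::metric_space \<times> 'u \<Rightarrow> 'x) \<Rightarrow> 'x \<Rightarrow> real \<Rightarrow> (nat \<Rightarrow> 'u) measure \<Rightarrow> bool" where
  "C_bounded p w f xs C \<Xi> \<longleftrightarrow>
     (\<Sum>n. ennreal (w n) * (\<integral>\<^sup>+ u. ennreal (dist (f (xs, u n)) xs powr p) \<partial>\<Xi>)) \<le> ennreal C"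

definition in_P_p ::
  "real \<Rightarrow> (nat \<Rightarrow> 'u::topological_space) set \<Rightarrow> ((nat \<Rightarrow> 'u) \<Rightarrow> (nat \<Rightarrow> 'u) \<Rightarrow> real)
    \<Rightarrow> (nat \<Rightarrow> 'u) measure \<Rightarrow> bool" where
  "in_P_p p Uu dU \<Xi> \<longleftrightarrow>
     prob_space \<Xi> \<and> sets \<Xi> = sets (restrict_space borel Uu) \<and>
     (\<exists>u0\<in>Uu. (\<integral>\<^sup>+ u. ennreal (dU u u0 powr p) \<partial>\<Xi>) < \<infinity>)"

definition in_M_p ::
  "real \<Rightarrow> real \<Rightarrow> real \<Rightarrow> (nat \<Rightarrow> real) \<Rightarrow> ('x::metric_space \<times> 'u::topological_space \<Rightarrow> 'x) \<Rightarrow> 'x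
    \<Rightarrow> ((nat \<Rightarrow> 'z::topological_space) \<Rightarrow> (nat \<Rightarrow> 'u)) \<Rightarrow> (nat \<Rightarrow> 'u) set
    \<Rightarrow> ((nat \<Rightarrow> 'u) \<Rightarrow> (nat \<Rightarrow> 'u) \<Rightarrow> real) \<Rightarrow> (nat \<Rightarrow> 'u) measure \<Rightarrow> bool" where
  "in_M_p p C \<kappa> w f xs V Uu dU \<Xi> \<longleftrightarrow>
     C_bounded p w f xs C \<Xi> \<and> in_P_p p Uu dU \<Xi> \<and>
     (\<exists>\<Theta>. prob_space \<Theta> \<and> sets \<Theta> = sets (borel :: (nat \<Rightarrow> 'z) measure) \<and>
          prob_space.indep_vars \<Theta> (\<lambda>_. borel) (\<lambda>n z. z n) UNIV \<and>
          kappa_contractive_marginals p \<kappa> f V \<Theta> \<and>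
          \<Xi> = distr \<Theta> (restrict_space borel Uu) V)"

end

theory Submission
  imports Defs
begin

text \<open>By the triangle inequality through \<open>f (x\<^sub>*, U\<^sub>t)\<close> and \<open>x\<^sub>*\<close>,
  \<open>d(f(x,U\<^sub>t),x)\<^sup>p \<le> 3\<^sup>p (d(f(x,U\<^sub>t),f(x\<^sub>*,U\<^sub>t))\<^sup>p + d(f(x\<^sub>*,U\<^sub>t),x\<^sub>*)\<^sup>p + d(x\<^sub>*,x)\<^sup>p)\<close>.
  Taking expectations, the tower property turns the conditional contraction bound
  into \<open>E d(f(x,U\<^sub>t),f(x\<^sub>*,U\<^sub>t))\<^sup>p \<le> \<kappa> d(x,x\<^sub>*)\<^sup>p\<close>, the middle term is the
  summand of the \<open>C\<close>-boundedness condition, and the last term is constant.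
  Since the weights sum to 1, the weighted sum is at most \<open>3\<^sup>p (\<kappa> d(x,x\<^sub>*)\<^sup>p + d(x\<^sub>*,x)\<^sup>p + C)\<close>.\<close>

lemma powr_add3_le:
  fixes a b c p :: real
  assumes "0 \<le> a" "0 \<le> b" "0 \<le> c" "0 < p"
  shows "(a + b + c) powr p \<le> 3 powr p * (a powr p + b powr p + c powr p)"
proof -
  define m where "m = max a (max b c)"
  have "(a + b + c) powr p \<le> (3 * m) powr p"
    by (rule powr_mono2) (use assms in \<open>auto simp: m_def\<close>)
  also have "\<dots> = 3 powr p * m powr p"
    using assms by (simp add: m_def powr_mult)
  also have "m powr p \<le> a powr p + b powr p + c powr p"
    by (auto simp: m_def max_def add_increasing add_increasing2)
  finally show ?thesis
    by simp
qed

lemma dist_powr_triangle3: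
  fixes a b c d :: "'a::metric_space"
  assumes "0 < p"
  shows "dist a d powr p \<le> 3 powr p * (dist a b powr p + dist b c powr p + dist c d powr p)"
proof -
  have "dist a d \<le> dist a b + dist b c + dist c d"
    by (metis dist_triangle add_left_mono order_trans add.assoc)
  then have "dist a d powr p \<le> (dist a b + dist b c + dist c d) powr p"
    using assms by (intro powr_mono2) auto
  also have "\<dots> \<le> 3 powr p * (dist a b powr p + dist b c powr p + dist c d powr p)"
    using assms by (intro powr_add3_le) auto
  finally show ?thesis .
qed

lemma suminf_weighted_le:
  fixes a b :: "nat \<Rightarrow> ennreal"
  assumes "w sums 1" "\<And>n. 0 \<le> w n" "\<And>n. a n \<le> c * (K + b n)"
  shows "(\<Sum>n. ennreal (w n) * a n) \<le> c * (K + (\<Sum>n. ennreal (w n) * b n))"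
proof -
  have "(\<lambda>n. ennreal (w n)) sums 1"
    using sums_ennreal[of w 1] assms(1,2) by simp
  then have w_sum: "(\<Sum>n. ennreal (w n)) = 1"
    by (simp add: sums_iff)
  have "(\<Sum>n. ennreal (w n) * a n) \<le> (\<Sum>n. c * (K * ennreal (w n) + ennreal (w n) * b n))"
  proof (rule suminf_le)
    fix n
    have "ennreal (w n) * a n \<le> ennreal (w n) * (c * (K + b n))"
      by (intro mult_left_mono assms(3)) simp
    then show "ennreal (w n) * a n \<le> c * (K * ennreal (w n) + ennreal (w n) * b n)"
      by (simp add: algebra_simps)
  qed auto
  also have "\<dots> = c * (K * (\<Sum>n. ennreal (w n)) + (\<Sum>n. ennreal (w n) * b n))"
    by (simp add: suminf_add[symmetric])
  finally show ?thesis
    by (simp add: w_sum)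
qed

lemma (in prob_space) nn_integral_le_if_AE_nn_cond_exp_le:
  assumes "subalgebra M F" "g \<in> borel_measurable M" "AE x in M. nn_cond_exp M F g x \<le> c"
  shows "(\<integral>\<^sup>+ x. g x \<partial>M) \<le> c"
proof -
  interpret finite_measure_subalgebra M F
    by unfold_locales (rule assms(1))
  have "(\<integral>\<^sup>+ x. g x \<partial>M) = (\<integral>\<^sup>+ x. 1 * nn_cond_exp M F g x \<partial>M)"
    using nn_cond_exp_intg[of "\<lambda>_. 1" g] assms(2) by simp
  also have "\<dots> \<le> (\<integral>\<^sup>+ x. c \<partial>M)"
    using assms(3) by (intro nn_integral_mono_AE) auto
  finally show ?thesis
    by (simp add: emeasure_space_1)
qed

lemma borel_measurable_continuous_on_sets_borel:
  assumes "sets M = sets borel" "continuous_on UNIV g"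
  shows "g \<in> borel_measurable M"
  using borel_measurable_continuous_onI[OF assms(2)] measurable_cong_sets[OF assms(1) refl]
  by metis

lemma subalgebra_past_algebra:
  assumes "sets \<Theta> = sets (borel :: (nat \<Rightarrow> 'z::topological_space) measure)"
  shows "subalgebra \<Theta> (past_algebra \<Theta> n)"
proof -
  let ?G = "{{z \<in> space \<Theta>. z m \<in> A} | m A. n < m \<and> A \<in> sets (borel :: 'z measure)}"
  have coordinate: "(\<lambda>z. z m) \<in> borel_measurable \<Theta>" for m
    using assms continuous_on_product_coordinates by (rule borel_measurable_continuous_on_sets_borel)
  have "{z \<in> space \<Theta>. z m \<in> A} \<in> sets \<Theta>" if "A \<in> sets borel" for m A
  proof -
    have "{z \<in> space \<Theta>. z m \<in> A} = (\<lambda>z. z m) -` A \<inter> space \<Theta>"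
      by auto
    then show ?thesis
      using measurable_sets[OF coordinate that] by simp
  qed
  then have "?G \<subseteq> sets \<Theta>"
    by blast
  moreover have "?G \<subseteq> Pow (space \<Theta>)"
    by blast
  ultimately show ?thesis
    unfolding subalgebra_def past_algebra_def
    by (simp add: space_measure_of_conv sets.sigma_sets_subset)
qed

lemma borel_measurable_section_comp:
  fixes f :: "'x::topological_space \<times> 'u::topological_space \<Rightarrow> 'y::topological_space"
    and V :: "'a::topological_space \<Rightarrow> nat \<Rightarrow> 'u"
  assumes "sets M = sets borel" "continuous_on UNIV f" "continuous_on UNIV V"
  shows "(\<lambda>z. f (x, V z n)) \<in> borel_measurable M"
proof (rule borel_measurable_continuous_on_sets_borel[OF assms(1)])
  have "continuous_on UNIV (\<lambda>z. V z n)"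
    using continuous_on_compose2[OF continuous_on_product_coordinates assms(3)] by simp
  then show "continuous_on UNIV (\<lambda>z. f (x, V z n))"
    using continuous_on_compose2[OF assms(2) continuous_on_Pair[OF continuous_on_const]] by blast
qed

lemma nn_integral_distr_range:
  assumes "sets \<Theta> = sets borel" "continuous_on UNIV V" "range V \<subseteq> U"
    and "g \<in> borel_measurable borel"
  shows "(\<integral>\<^sup>+ u. g u \<partial>distr \<Theta> (restrict_space borel U) V) = (\<integral>\<^sup>+ z. g (V z) \<partial>\<Theta>)"
proof (rule nn_integral_distr)
  have "V \<in> borel_measurable \<Theta>"
    using assms(1,2) by (rule borel_measurable_continuous_on_sets_borel)
  then show "V \<in> measurable \<Theta> (restrict_space borel U)"
    using assms(3) by (intro measurable_restrict_space2) auto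
  show "g \<in> borel_measurable (distr \<Theta> (restrict_space borel U) V)"
    using measurable_restrict_space1[OF assms(4)] by simp
qed

lemma nn_integral_contraction_le:
  fixes f :: "'x::polish_space \<times> 'u::polish_space \<Rightarrow> 'x"
    and V :: "(nat \<Rightarrow> 'z::polish_space) \<Rightarrow> nat \<Rightarrow> 'u"
  assumes "prob_space \<Theta>" "sets \<Theta> = sets borel" "kappa_contractive_marginals p \<kappa> f V \<Theta>"
    and "continuous_on UNIV f" "continuous_on UNIV V"
  shows "(\<integral>\<^sup>+ z. ennreal (dist (f (x, V z n)) (f (y, V z n)) powr p) \<partial>\<Theta>)
    \<le> ennreal (\<kappa> * dist x y powr p)"
proof (rule prob_space.nn_integral_le_if_AE_nn_cond_exp_le[OF assms(1)])
  show "subalgebra \<Theta> (past_algebra \<Theta> n)"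
    using assms(2) by (rule subalgebra_past_algebra)
  have "(\<lambda>z. f (y, V z n)) \<in> borel_measurable \<Theta>" for y
    using assms(2,4,5) by (rule borel_measurable_section_comp)
  then show "(\<lambda>z. ennreal (dist (f (x, V z n)) (f (y, V z n)) powr p)) \<in> borel_measurable \<Theta>"
    by measurable
  show "AE z in \<Theta>. nn_cond_exp \<Theta> (past_algebra \<Theta> n)
      (\<lambda>z. ennreal (dist (f (x, V z n)) (f (y, V z n)) powr p)) z \<le> ennreal (\<kappa> * dist x y powr p)"
    using assms(3) unfolding kappa_contractive_marginals_def by blast
qed

lemma nn_integral_dist_powr_le:
  fixes f :: "'x::polish_space \<times> 'u::polish_space \<Rightarrow> 'x"
    and V :: "(nat \<Rightarrow> 'z::polish_space) \<Rightarrow> nat \<Rightarrow> 'u"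
  assumes "prob_space \<Theta>" "sets \<Theta> = sets borel" "kappa_contractive_marginals p \<kappa> f V \<Theta>"
    and "continuous_on UNIV f" "continuous_on UNIV V" "0 < p"
  shows "(\<integral>\<^sup>+ z. ennreal (dist (f (x, V z n)) x powr p) \<partial>\<Theta>)
    \<le> ennreal (3 powr p) * (ennreal (\<kappa> * dist x y powr p) + ennreal (dist y x powr p)
         + (\<integral>\<^sup>+ z. ennreal (dist (f (y, V z n)) y powr p) \<partial>\<Theta>))"
proof -
  interpret prob_space \<Theta>
    by (rule assms(1))
  let ?contr = "\<lambda>z. ennreal (dist (f (x, V z n)) (f (y, V z n)) powr p)"
  let ?moment = "\<lambda>z. ennreal (dist (f (y, V z n)) y powr p)"
  have [measurable]: "(\<lambda>z. f (x', V z n)) \<in> borel_measurable \<Theta>" for x'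
    using assms(2,4,5) by (rule borel_measurable_section_comp)
  have "(\<integral>\<^sup>+ z. ennreal (dist (f (x, V z n)) x powr p) \<partial>\<Theta>)
      \<le> (\<integral>\<^sup>+ z. ennreal (3 powr p) * (?contr z + ?moment z + ennreal (dist y x powr p)) \<partial>\<Theta>)"
  proof (rule nn_integral_mono)
    fix z
    have "dist (f (x, V z n)) x powr p \<le> 3 powr p
        * (dist (f (x, V z n)) (f (y, V z n)) powr p + dist (f (y, V z n)) y powr p + dist y x powr p)"
      using assms(6) by (rule dist_powr_triangle3)
    then show "ennreal (dist (f (x, V z n)) x powr p)
        \<le> ennreal (3 powr p) * (?contr z + ?moment z + ennreal (dist y x powr p))"
      by (simp add: ennreal_leI flip: ennreal_plus ennreal_mult)
  qed
  also have "\<dots> = ennreal (3 powr p)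
      * ((\<integral>\<^sup>+ z. ?contr z \<partial>\<Theta>) + (\<integral>\<^sup>+ z. ?moment z \<partial>\<Theta>) + ennreal (dist y x powr p))"
    by (simp add: nn_integral_cmult nn_integral_add emeasure_space_1)
  also have "\<dots> \<le> ennreal (3 powr p) * (ennreal (\<kappa> * dist x y powr p) + ennreal (dist y x powr p)
      + (\<integral>\<^sup>+ z. ?moment z \<partial>\<Theta>))"
    using nn_integral_contraction_le[OF assms(1-5), where x = x and y = y and n = n]
    by (intro mult_left_mono) (auto simp: algebra_simps intro: add_right_mono)
  finally show ?thesis .
qed

theorem lemmaB3:
  fixes p C \<kappa> :: real
    and f :: "'x::polish_space \<times> 'u::polish_space \<Rightarrow> 'x"
    and V :: "(nat \<Rightarrow> 'z::polish_space) \<Rightarrow> (nat \<Rightarrow> 'u)"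
    and Uu :: "(nat \<Rightarrow> 'u) set"
    and dU :: "(nat \<Rightarrow> 'u) \<Rightarrow> (nat \<Rightarrow> 'u) \<Rightarrow> real"
    and w :: "nat \<Rightarrow> real"
    and xs :: 'x
    and \<Xi> :: "(nat \<Rightarrow> 'u) measure"
  assumes p: "1 \<le> p"
    and f_cont: "continuous_on UNIV f"
    and V_cont: "continuous_on UNIV V"
    and V_causal: "causal V"
    and Uu_def: "Uu = range V"
    and Uu_Polish: "completely_metrizable_space (subtopology euclidean Uu)"
                   "separable_space (subtopology euclidean Uu)"
    and dU_metric: "Metric_space Uu dU"
    and dU_top: "Metric_space.mtopology Uu dU = subtopology euclidean Uu"
    and w: "admissible_weights w"
    and C: "0 < C" and \<kappa>: "0 < \<kappa>" "\<kappa> < 1"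
    and \<Xi>: "in_M_p p C \<kappa> w f xs V Uu dU \<Xi>"
  shows "\<forall>x. (\<Sum>n. ennreal (w n) * (\<integral>\<^sup>+ u. ennreal (dist (f (x, u n)) x powr p) \<partial>\<Xi>)) < \<infinity>"
proof
  fix x :: 'x
  obtain \<Theta> :: "(nat \<Rightarrow> 'z) measure" where \<Theta>: "prob_space \<Theta>" "sets \<Theta> = sets borel"
      "kappa_contractive_marginals p \<kappa> f V \<Theta>" "\<Xi> = distr \<Theta> (restrict_space borel Uu) V"
    using \<Xi> unfolding in_M_p_def by blast
  have weights: "w sums 1" "\<And>n. 0 \<le> w n"
    using w unfolding admissible_weights_def by (auto simp: less_imp_le)
  have moment_distr: "(\<integral>\<^sup>+ u. ennreal (dist (f (y, u n)) y powr p) \<partial>\<Xi>)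
      = (\<integral>\<^sup>+ z. ennreal (dist (f (y, V z n)) y powr p) \<partial>\<Theta>)" for y n
    unfolding \<Theta>(4) using \<Theta>(2) V_cont Uu_def borel_measurable_section_comp[OF refl f_cont continuous_on_id]
    by (intro nn_integral_distr_range) measurable
  define K where "K = ennreal (\<kappa> * dist x xs powr p) + ennreal (dist xs x powr p)"
  have "(\<Sum>n. ennreal (w n) * (\<integral>\<^sup>+ u. ennreal (dist (f (x, u n)) x powr p) \<partial>\<Xi>))
      \<le> ennreal (3 powr p) * (K + (\<Sum>n. ennreal (w n) * (\<integral>\<^sup>+ u. ennreal (dist (f (xs, u n)) xs powr p) \<partial>\<Xi>)))"
    using nn_integral_dist_powr_le[OF \<Theta>(1-3) f_cont V_cont, where y = xs] p
    by (intro suminf_weighted_le weights) (simp add: moment_distr K_def add.assoc)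
  also have "\<dots> \<le> ennreal (3 powr p) * (K + ennreal C)"
    using \<Xi> unfolding in_M_p_def C_bounded_def by (intro mult_left_mono add_left_mono) auto
  also have "\<dots> < \<infinity>"
    by (simp add: K_def ennreal_mult_less_top)
  finally show "(\<Sum>n. ennreal (w n) * (\<integral>\<^sup>+ u. ennreal (dist (f (x, u n)) x powr p) \<partial>\<Xi>)) < \<infinity>" .
qed

end
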